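(* Let $X_d=X^{\otimes d}$ and suppose $\lambda^X_k/\Lambda^X\sim\beta/(k(\ln k)(\ln\ln k)^{1+s})$ as $k\to\infty$, with $\beta>0$ and $s>0$. Then $$\ln\ln n^{X_d}(\varepsilon)\sim\Bigl(\frac{\beta d}{s\,|\ln(1-\varepsilon^2)|}\Bigr)^{1/s},\quad d\to\infty,\quad\text{for all }\varepsilon\in(0,1).$$
   Context: Let $X$ be a centered random element of a separable Hilbert space $H$ with $\mathbb E\|X\|^2<\infty$, covariance eigenvalues $\lambda^X_1\ge\lambda^X_2\ge\dots\ge0$ (with multiplicity), $\lambda^X_1>0$, trace $\Lambda^X$, and $\bar\lambda^X_k=\lambda^X_k/\Lambda^X$. $X_d=X^{\otimes d}$ is the centered random element of $H^{\otimes d}$ with covariance operator $(K^X)^{\otimes d}$; its eigenvalues are $\prod_{j=1}^d\lambda^X_{k_j}$. With $\bar\lambda^{X_d}_k$ the normalized nonincreasing eigenvalues of $X_d$, $n^{X_d}(\varepsilon)=\min\{n\in\mathbb N:\sum_{k>n}\bar\lambda^{X_d}_k\le\varepsilon^2\}$. *)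

theory Defs
  imports "HOL-Analysis.Analysis" "HOL-Library.Landau_Symbols"
begin

text \<open>Eigenvalues of X are given as a sequence lam indexed from 1 (lam 0 is unused).
  The trace is the sum of all eigenvalues.\<close>

definition trace_ev :: "(nat \<Rightarrow> real) \<Rightarrow> real" where
  "trace_ev lam = (\<Sum>k. lam (Suc k))"

definition tuples :: "nat \<Rightarrow> nat list set" where
  "tuples d = {ks. length ks = d \<and> (\<forall>k\<in>set ks. 1 \<le> k)}"

text \<open>mu (indexed from 1) is a nonincreasing enumeration, with multiplicity, of the
  eigenvalues prod_j lam k_j of the tensor power X^{\<otimes> d}.\<close>

definition is_decr_rearr :: "(nat \<Rightarrow> real) \<Rightarrow> nat \<Rightarrow> (nat \<Rightarrow> real) \<Rightarrow> bool" where
  "is_decr_rearr lam d mu \<longleftrightarrow>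
     (\<exists>\<sigma>. bij_betw \<sigma> {1..} (tuples d) \<and>
          (\<forall>k\<ge>1. mu k = prod_list (map lam (\<sigma> k))) \<and>
          (\<forall>k\<ge>1. mu (Suc k) \<le> mu k))"

definition tensor_eigs :: "(nat \<Rightarrow> real) \<Rightarrow> nat \<Rightarrow> nat \<Rightarrow> real" where
  "tensor_eigs lam d = (SOME mu. is_decr_rearr lam d mu)"

text \<open>n^{X_d}(eps) = min {n : sum_{k>n} normalized eigenvalue_k <= eps^2};
  the trace of X_d is (trace of X)^d.\<close>

definition n_tensor :: "(nat \<Rightarrow> real) \<Rightarrow> nat \<Rightarrow> real \<Rightarrow> nat" where
  "n_tensor lam d \<epsilon> =
     (LEAST n. (\<Sum>j. tensor_eigs lam d (Suc n + j) / trace_ev lam ^ d) \<le> \<epsilon>\<^sup>2)"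

end

theory Submission
  imports Defs
begin

text \<open>
  Normalise the eigenvalues to \<open>p k = lam k / T\<close> with \<open>T\<close> the trace, so
  that \<open>\<Sum>p = 1\<close>, and write \<open>R m = \<Sum>\<^sub>k\<^sub>>\<^sub>m p k\<close> for the tails.  The eigenvalues of the
  tensor power are the products \<open>p k\<^sub>1 \<cdots> p k\<^sub>d\<close>; the \<open>m\<^sup>d\<close> tuples with all entries
  \<open>\<le> m\<close> carry total mass \<open>(1 - R m)\<^sup>d\<close>, and every other tuple has weight \<open>\<le> p (m+1)\<close>.
  This yields two-sided bounds on \<open>n\<^sub>d = n_tensor lam d \<epsilon>\<close>:
    \<open>(1 - R m)\<^sup>d \<ge> 1 - \<epsilon>\<^sup>2 \<Longrightarrow> n\<^sub>d \<le> m\<^sup>d\<close>   and   \<open>1 - \<epsilon>\<^sup>2 \<le> (1 - R (m-1))\<^sup>d + n\<^sub>d p m\<close>.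
  The hypothesis \<open>p k \<sim> \<beta> g(k)\<close> with \<open>g(x) = 1/(x ln x (ln ln x)\<^sup>1\<^sup>+\<^sup>s)\<close> gives, by
  comparison with the antiderivative \<open>-F\<close>, \<open>F(x) = (ln ln x)\<^sup>-\<^sup>s/s\<close>, that \<open>R m \<approx> \<beta> F(m)\<close>.
  Choosing \<open>ln ln m \<approx> (1 \<plusminus> \<eta>) L(d)\<close> with \<open>L(d) = (\<beta> d/(s c))\<^sup>1\<^sup>/\<^sup>s\<close>, \<open>c = -ln(1-\<epsilon>\<^sup>2)\<close>,
  makes \<open>d R m\<close> cross the threshold \<open>c\<close>, and the two bounds squeeze
  \<open>ln ln n\<^sub>d\<close> between \<open>(1 \<plusminus> \<eta>) L(d)\<close> up to \<open>O(ln d)\<close>, which is \<open>o(L(d))\<close>.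
\<close>

lemma decreasing_enumeration_exists:
  fixes f :: "'a \<Rightarrow> real" and A :: "'a set"
  assumes inf: "infinite A"
    and fin: "\<And>\<tau>. \<tau> > 0 \<Longrightarrow> finite {a\<in>A. f a \<ge> \<tau>}"
    and pos: "\<And>a. a \<in> A \<Longrightarrow> f a > 0"
  shows "\<exists>\<sigma>. bij_betw \<sigma> UNIV A \<and> (\<forall>n. f (\<sigma> (Suc n)) \<le> f (\<sigma> n))"
proof -
  define pick where "pick X = (SOME a. a \<in> A - X \<and> (\<forall>b\<in>A - X. f b \<le> f a))" for X
  have pick: "pick X \<in> A - X \<and> (\<forall>b\<in>A - X. f b \<le> f (pick X))" if "finite X" for X
  proof -
    have "infinite (A - X)" using inf that by (simp add: Diff_infinite_finite)
    then obtain a0 where a0: "a0 \<in> A - X" by (metis finite.emptyI ex_in_conv)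
    let ?S = "{a\<in>A - X. f a \<ge> f a0}"
    have "finite ?S" by (rule finite_subset[OF _ fin[of "f a0"]]) (use pos a0 in auto)
    moreover have "a0 \<in> ?S" using a0 by auto
    ultimately have M: "Max (f ` ?S) \<in> f ` ?S" "\<forall>b\<in>?S. f b \<le> Max (f ` ?S)"
      by (auto intro!: Max_in Max_ge)
    then obtain a where a: "a \<in> ?S" "f a = Max (f ` ?S)" by auto
    have "a \<in> A - X \<and> (\<forall>b\<in>A - X. f b \<le> f a)"
      using a M by (auto intro: order_trans[of _ "f a0"] less_imp_le simp: not_le)
    thus ?thesis unfolding pick_def by (rule someI)
  qed
  define U where "U = rec_nat {} (\<lambda>_ X. insert (pick X) X)"
  have U0: "U 0 = {}" and US: "U (Suc n) = insert (pick (U n)) (U n)" for n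
    by (simp_all add: U_def)
  have finU: "finite (U n)" for n by (induction n) (simp_all add: U0 US)
  define \<sigma> where "\<sigma> n = pick (U n)" for n
  have \<sigma>U: "\<sigma> n \<in> A - U n" "\<forall>b\<in>A - U n. f b \<le> f (\<sigma> n)" for n
    using pick[OF finU[of n]] by (simp_all add: \<sigma>_def)
  have Uimg: "U n = \<sigma> ` {..<n}" for n
    by (induction n) (simp_all add: U0 US \<sigma>_def lessThan_Suc)
  have inj: "inj \<sigma>"
  proof (rule injI)
    fix m n assume eq: "\<sigma> m = \<sigma> n"
    have "\<sigma> m \<notin> \<sigma> ` {..<n}" "\<sigma> n \<notin> \<sigma> ` {..<m}"
      using \<sigma>U(1)[of n] \<sigma>U(1)[of m] eq by (auto simp: Uimg)
    thus "m = n" by (metis lessThan_iff linorder_neqE_nat imageI)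
  qed
  have mono: "f (\<sigma> (Suc n)) \<le> f (\<sigma> n)" for n
    using \<sigma>U(1)[of "Suc n"] \<sigma>U(2)[of n] by (auto simp: US)
  have sur: "a \<in> range \<sigma>" if a: "a \<in> A" for a
  proof (rule ccontr)
    assume "a \<notin> range \<sigma>"
    hence "a \<in> A - U n" for n using a by (auto simp: Uimg)
    hence "f a \<le> f (\<sigma> n)" for n using \<sigma>U(2) by blast
    hence "range \<sigma> \<subseteq> {b\<in>A. f b \<ge> f a}" using \<sigma>U(1) by auto
    hence "finite (range \<sigma>)" using fin[of "f a"] pos[OF a] by (auto intro: finite_subset)
    thus False using finite_imageD[of \<sigma> UNIV] inj infinite_UNIV_nat by blast
  qed
  have "bij_betw \<sigma> UNIV A"
    unfolding bij_betw_def using inj sur \<sigma>U(1) by auto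
  thus ?thesis using mono by blast
qed

lemma sum_prod_list_lists_length:
  fixes p :: "'a \<Rightarrow> 'b::comm_semiring_1"
  assumes "finite A"
  shows "(\<Sum>t\<in>{xs. set xs \<subseteq> A \<and> length xs = d}. prod_list (map p t)) = (sum p A) ^ d"
proof (induction d)
  case 0
  have "{xs. set xs \<subseteq> A \<and> length xs = 0} = {[]}" by auto
  thus ?case by simp
next
  case (Suc d)
  let ?L = "{xs. set xs \<subseteq> A \<and> length xs = d}"
  have inj: "inj_on (\<lambda>(xs, n). n#xs) (?L \<times> A)" by (auto simp: inj_on_def)
  have "(\<Sum>t\<in>{xs. set xs \<subseteq> A \<and> length xs = Suc d}. prod_list (map p t))
      = (\<Sum>z\<in>?L \<times> A. prod_list (map p ((\<lambda>(xs, n). n#xs) z)))"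
    unfolding lists_length_Suc_eq by (rule sum.reindex[OF inj, unfolded comp_def])
  also have "\<dots> = (\<Sum>xs\<in>?L. \<Sum>n\<in>A. p n * prod_list (map p xs))"
    by (simp add: sum.cartesian_product case_prod_beta)
  also have "\<dots> = (\<Sum>xs\<in>?L. sum p A * prod_list (map p xs))"
    by (simp add: sum_distrib_right)
  also have "\<dots> = sum p A * (sum p A)^d" by (simp add: sum_distrib_left[symmetric] Suc)
  finally show ?case by simp
qed

lemma prod_list_unit_interval:
  fixes p :: "'a \<Rightarrow> real"
  assumes "\<forall>x\<in>set t. 0 \<le> p x \<and> p x \<le> 1"
  shows "0 \<le> prod_list (map p t) \<and> prod_list (map p t) \<le> 1"
  using assms by (induction t) (auto intro: mult_le_one)

lemma prod_list_le_factor: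
  fixes p :: "'a \<Rightarrow> real"
  assumes "\<forall>x\<in>set t. 0 \<le> p x \<and> p x \<le> 1" "j \<in> set t"
  shows "prod_list (map p t) \<le> p j"
  using assms
proof (induction t)
  case (Cons a t)
  have pl: "0 \<le> prod_list (map p t)" "prod_list (map p t) \<le> 1"
    using prod_list_unit_interval[of t p] Cons.prems(1) by auto
  have pa: "0 \<le> p a" "p a \<le> 1" using Cons.prems(1) by auto
  show ?case
  proof (cases "j = a")
    case True thus ?thesis using pl pa by (simp add: mult_left_le)
  next
    case False
    hence "prod_list (map p t) \<le> p j" using Cons by auto
    thus ?thesis using pl pa by (simp add: order_trans[OF mult_left_le_one_le])
  qed
qed simp

lemma antimono_from_one:
  fixes f :: "nat \<Rightarrow> real"
  assumes "\<forall>k\<ge>1. f (Suc k) \<le> f k" "1 \<le> a" "a \<le> b"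
  shows "f b \<le> f a"
  using assms(3,2)
proof (induction b rule: dec_induct)
  case (step n) thus ?case using assms(1) by (meson order_trans le_trans)
qed simp

lemma sum_le_initial_segment:
  fixes f :: "nat \<Rightarrow> real"
  assumes mono: "\<forall>k\<ge>1. f (Suc k) \<le> f k" and I: "finite I" "I \<subseteq> {1..}" "card I = N"
  shows "sum f I \<le> sum f {1..N}"
proof -
  let ?J = "{1..N}"
  have s1: "sum f I = sum f (I \<inter> ?J) + sum f (I - ?J)"
    using I(1) by (rule sum.Int_Diff)
  have s2: "sum f ?J = sum f (I \<inter> ?J) + sum f (?J - I)"
    by (metis Int_commute finite_atLeastAtMost sum.Int_Diff)
  have cc: "card (I - ?J) = card (?J - I)"
  proof -
    have "card (I - ?J) = card I - card (I \<inter> ?J)" using I(1) by (simp add: card_Diff_subset_Int)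
    moreover have "card (?J - I) = card ?J - card (I \<inter> ?J)"
      by (metis Int_commute card_Diff_subset_Int finite_Int finite_atLeastAtMost)
    ultimately show ?thesis using I(3) by simp
  qed
  have a: "\<forall>i\<in>I - ?J. f i \<le> f N"
  proof (cases "N = 0")
    case True
    thus ?thesis using I by auto
  next
    case False
    thus ?thesis using I(2) antimono_from_one[OF mono, of N] by (auto simp: not_le)
  qed
  have b: "\<forall>j\<in>?J - I. f N \<le> f j" using antimono_from_one[OF mono] by auto
  have "sum f (I - ?J) \<le> of_nat (card (I - ?J)) * f N"
    using sum_bounded_above[of "I - ?J" f "f N"] a by auto
  also have "\<dots> = of_nat (card (?J - I)) * f N" using cc by simp
  also have "\<dots> \<le> sum f (?J - I)"
    using sum_bounded_below[of "?J - I" "f N" f] b by auto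
  finally show ?thesis using s1 s2 by linarith
qed

text \<open>The density \<open>g(x) = 1/(x ln x (ln ln x)\<^sup>1\<^sup>+\<^sup>s)\<close> of the eigenvalue profile and its tail
  integral \<open>F(x) = \<integral>\<^sub>x\<^sup>\<infinity> g = (ln ln x)\<^sup>-\<^sup>s / s\<close>.\<close>

definition ll_density :: "real \<Rightarrow> real \<Rightarrow> real" where
  "ll_density s x = 1 / (x * ln x * ln (ln x) powr (1 + s))"

definition ll_tail :: "real \<Rightarrow> real \<Rightarrow> real" where
  "ll_tail s x = ln (ln x) powr (- s) / s"

lemma ln_ln_pos: "(4::real) \<le> x \<Longrightarrow> 0 < ln (ln x) \<and> 1 < ln x"
proof -
  assume x: "4 \<le> x"
  have "exp 1 < x" using exp_le x by linarith
  hence "1 < ln x" using x by (metis exp_gt_zero ln_exp ln_less_cancel_iff less_le_trans zero_less_numeral)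
  thus ?thesis by simp
qed

lemma ll_tail_deriv:
  assumes s: "s > 0" and x: "4 \<le> x"
  shows "DERIV (ll_tail s) x :> - ll_density s x"
proof -
  have l: "0 < ln (ln x)" "1 < ln x" using ln_ln_pos[OF x] by auto
  have x0: "0 < x" using x by simp
  have "DERIV (\<lambda>x. ln (ln x) powr (- s) / s) x :>
        ((- s) * ln (ln x) powr (- s - 1) * (inverse (ln x) * inverse x)) / s"
    using l x0 x by (auto intro!: derivative_eq_intros simp: field_simps)
  moreover have "ln (ln x) powr (- s - 1) = 1 / ln (ln x) powr (1 + s)"
  proof -
    have "- s - 1 = - (1 + s)" by simp
    thus ?thesis using l by (simp only: powr_minus) (simp add: divide_inverse)
  qed
  ultimately show ?thesis using s l x0
    unfolding ll_tail_def[abs_def] ll_density_def by (simp add: field_simps)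
qed

lemma ll_density_pos: "4 \<le> x \<Longrightarrow> 0 < ll_density s x"
  using ln_ln_pos[of x] by (simp add: ll_density_def)

lemma ll_density_antimono:
  assumes "4 \<le> x" "x \<le> y" "0 < s"
  shows "ll_density s y \<le> ll_density s x"
proof -
  have lx: "0 < ln (ln x)" "1 < ln x" using ln_ln_pos[OF assms(1)] by auto
  have a: "ln x \<le> ln y" using assms by simp
  hence "ln (ln x) powr (1 + s) \<le> ln (ln y) powr (1 + s)"
    using lx assms by (auto intro: powr_mono2)
  hence "x * ln x * ln (ln x) powr (1 + s) \<le> y * ln y * ln (ln y) powr (1 + s)"
    using assms a lx by (intro mult_mono) auto
  moreover have "0 < x * ln x * ln (ln x) powr (1 + s)" using lx assms by simp
  ultimately show ?thesis unfolding ll_density_def by (intro divide_left_mono) auto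
qed

text \<open>Since \<open>g\<close> is decreasing, each unit increment of \<open>F\<close> is squeezed between the
  values of \<open>g\<close> at the endpoints (mean value theorem).\<close>

lemma ll_tail_increment_bounds:
  assumes s: "0 < s" and x: "4 \<le> x"
  shows "ll_tail s x - ll_tail s (x + 1) \<le> ll_density s x"
    and "ll_density s (x + 1) \<le> ll_tail s x - ll_tail s (x + 1)"
proof -
  obtain z where z: "x < z" "z < x + 1"
      "ll_tail s (x + 1) - ll_tail s x = (x + 1 - x) * (- ll_density s z)"
    using MVT2[of x "x+1" "ll_tail s" "\<lambda>t. - ll_density s t"] ll_tail_deriv[OF s] x by force
  have "ll_density s z \<le> ll_density s x" "ll_density s (x+1) \<le> ll_density s z"
    using ll_density_antimono[of x z s] ll_density_antimono[of z "x+1" s] z x s by auto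
  thus "ll_tail s x - ll_tail s (x + 1) \<le> ll_density s x"
    "ll_density s (x + 1) \<le> ll_tail s x - ll_tail s (x + 1)"
    using z by auto
qed

lemma ll_tail_tendsto_zero:
  assumes s: "0 < s"
  shows "(\<lambda>n. ll_tail s (real n)) \<longlonglongrightarrow> 0"
proof -
  have "filterlim (\<lambda>n. ln (ln (real n))) at_top sequentially"
    by (intro filterlim_compose[OF ln_at_top] filterlim_compose[OF ln_at_top] filterlim_real_sequentially)
  hence "(\<lambda>n. ln (ln (real n)) powr (- s)) \<longlonglongrightarrow> 0"
    using s by (intro tendsto_neg_powr) auto
  hence "(\<lambda>n. ln (ln (real n)) powr (- s) / s) \<longlonglongrightarrow> 0 / s"
    by (intro tendsto_divide) (use s in auto)
  thus ?thesis by (simp add: ll_tail_def)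
qed

lemma ll_tail_le:
  assumes s: "0 < s" and y: "0 < y" and z: "y \<le> ln (ln x)"
  shows "ll_tail s x \<le> y powr (- s) / s"
  unfolding ll_tail_def using powr_mono2'[of "-s" y "ln (ln x)"] s y z
  by (intro divide_right_mono) auto

lemma ll_tail_ge:
  assumes s: "0 < s" and z: "0 < ln (ln x)" and y: "ln (ln x) \<le> y"
  shows "y powr (- s) / s \<le> ll_tail s x"
  unfolding ll_tail_def using powr_mono2'[of "-s" "ln (ln x)" y] s y z
  by (intro divide_right_mono) auto

text \<open>Tails \<open>R m = \<Sum>\<^sub>k\<^sub>>\<^sub>m p k\<close> of a sequence (indexed from 1) whose total sum is 1.\<close>

definition tail_mass :: "(nat \<Rightarrow> real) \<Rightarrow> nat \<Rightarrow> real" where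
  "tail_mass p m = 1 - (\<Sum>i<m. p (Suc i))"

locale normalized_seq =
  fixes p :: "nat \<Rightarrow> real"
  assumes p_pos: "\<forall>k\<ge>1. 0 < p k"
    and p_dec: "\<forall>k\<ge>1. p (Suc k) \<le> p k"
    and p_sums: "(\<lambda>k. p (Suc k)) sums 1"
begin

lemma tail_mass_sums: "(\<lambda>n. p (Suc (n + m))) sums tail_mass p m"
  using sums_split_initial_segment[OF p_sums, of m] by (simp add: tail_mass_def)

lemma partial_sum_le_1: "(\<Sum>i<m. p (Suc i)) \<le> 1"
  using sum_le_suminf[of "\<lambda>k. p (Suc k)" "{..<m}"] p_sums p_pos
  by (auto simp: sums_iff less_imp_le)

lemma tail_mass_unit_interval: "0 \<le> tail_mass p m" "tail_mass p m \<le> 1"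
  using partial_sum_le_1[of m] p_pos
  by (auto simp: tail_mass_def less_imp_le intro!: sum_nonneg)

text \<open>Monotonicity and total mass 1 give \<open>k p k \<le> 1\<close>.\<close>

lemma p_le_inverse: assumes "1 \<le> k" shows "p k \<le> 1 / real k"
proof -
  have "(\<Sum>i<k. p k) \<le> (\<Sum>i<k. p (Suc i))"
    using assms by (intro sum_mono antimono_from_one[OF p_dec]) auto
  hence "real k * p k \<le> 1" using partial_sum_le_1[of k] by simp
  thus ?thesis using assms by (simp add: field_simps)
qed

lemma p_le_1: "1 \<le> k \<Longrightarrow> p k \<le> 1"
  using p_le_inverse[of k] by (simp add: divide_le_eq_1 order_trans)

text \<open>A pointwise bound \<open>p k \<le> C g(k)\<close> from \<open>M\<close> on bounds the tail by \<open>C F(m)\<close>;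
  the tail sum is compared with the telescoping series of increments of \<open>F\<close>.\<close>

lemma tail_mass_upper:
  assumes s: "0 < s" and M: "4 \<le> M" and c: "0 \<le> C"
    and bd: "\<forall>k\<ge>M. p k \<le> C * ll_density s (real k)" and m: "M \<le> m"
  shows "tail_mass p m \<le> C * ll_tail s (real m)"
proof -
  have lim: "(\<lambda>n. ll_tail s (real (n + m))) \<longlonglongrightarrow> 0"
    using LIMSEQ_ignore_initial_segment[OF ll_tail_tendsto_zero[OF s], of m] by simp
  have tel: "(\<lambda>n. C * (ll_tail s (real (n + m)) - ll_tail s (real (Suc (n + m)))))
      sums (C * (ll_tail s (real m) - 0))"
    using sums_mult[OF telescope_sums'[OF lim], of C] by simp
  have "p (Suc (n + m)) \<le> C * (ll_tail s (real (n + m)) - ll_tail s (real (Suc (n + m))))" for n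
  proof -
    have x4: "4 \<le> real (n + m)" using M m by simp
    have "p (Suc (n + m)) \<le> C * ll_density s (real (Suc (n + m)))"
      using bd[rule_format, of "Suc (n + m)"] m by simp
    also have "\<dots> \<le> C * (ll_tail s (real (n + m)) - ll_tail s (real (Suc (n + m))))"
      using ll_tail_increment_bounds(2)[OF s x4] c by (intro mult_left_mono) (auto simp: add.commute)
    finally show ?thesis .
  qed
  from sums_le[OF _ tail_mass_sums tel] this show ?thesis by simp
qed

lemma tail_mass_lower:
  assumes s: "0 < s" and M: "4 \<le> M" and c: "0 \<le> C"
    and bd: "\<forall>k\<ge>M. C * ll_density s (real k) \<le> p k" and m: "M \<le> m"
  shows "C * ll_tail s (real (Suc m)) \<le> tail_mass p m"
proof -
  have lim: "(\<lambda>n. ll_tail s (real (n + Suc m))) \<longlonglongrightarrow> 0"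
    using LIMSEQ_ignore_initial_segment[OF ll_tail_tendsto_zero[OF s], of "Suc m"] by simp
  have tel: "(\<lambda>n. C * (ll_tail s (real (n + Suc m)) - ll_tail s (real (Suc (n + Suc m)))))
      sums (C * (ll_tail s (real (Suc m)) - 0))"
    using sums_mult[OF telescope_sums'[OF lim], of C] by simp
  have "C * (ll_tail s (real (n + Suc m)) - ll_tail s (real (Suc (n + Suc m)))) \<le> p (Suc (n + m))"
    for n
  proof -
    have x4: "4 \<le> real (n + Suc m)" using M m by simp
    have "C * (ll_tail s (real (n + Suc m)) - ll_tail s (real (Suc (n + Suc m))))
        \<le> C * ll_density s (real (n + Suc m))"
      using ll_tail_increment_bounds(1)[OF s x4] c by (intro mult_left_mono) (auto simp: add.commute)
    also have "\<dots> \<le> p (Suc (n + m))" using bd[rule_format, of "Suc (n + m)"] m by simp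
    finally show ?thesis .
  qed
  from sums_le[OF _ tel tail_mass_sums] this show ?thesis by simp
qed

end

definition tuple_weight :: "(nat \<Rightarrow> real) \<Rightarrow> nat list \<Rightarrow> real" where
  "tuple_weight p t = prod_list (map p t)"

lemma prod_list_scaled: "(\<forall>k. lam k = T * p k) \<Longrightarrow> prod_list (map lam t) = T ^ length t * tuple_weight p t"
  by (induction t) (simp_all add: tuple_weight_def)

locale tensor_setting = normalized_seq p for p +
  fixes lam :: "nat \<Rightarrow> real" and T :: real
  assumes T_pos: "0 < T" and lam_eq: "\<forall>k. lam k = T * p k" and trace_eq: "trace_ev lam = T"
begin

lemma weight_pos: "\<forall>x\<in>set t. 1 \<le> x \<Longrightarrow> 0 < tuple_weight p t"
  using p_pos by (induction t) (auto simp: tuple_weight_def)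

lemma weight_nonneg: "t \<in> tuples d \<Longrightarrow> 0 \<le> tuple_weight p t"
  using weight_pos[of t] by (simp add: tuples_def less_imp_le)

lemma weight_le_entry:
  assumes "t \<in> tuples d" "j \<in> set t"
  shows "tuple_weight p t \<le> p j"
proof -
  have "\<forall>x\<in>set t. 0 \<le> p x \<and> p x \<le> 1"
    using assms(1) p_pos p_le_1 by (fastforce simp: tuples_def less_imp_le)
  thus ?thesis unfolding tuple_weight_def using assms(2) by (rule prod_list_le_factor)
qed

text \<open>The multi-indices of weight at least \<open>\<tau>\<close> are finite in number (their entries are
  at most \<open>1/\<tau>\<close>), so a nonincreasing rearrangement of the tensor eigenvalues exists and
  \<open>tensor_eigs\<close> is one.\<close>

lemma tensor_eigs_rearrangement:
  assumes d: "1 \<le> d"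
  shows "is_decr_rearr lam d (tensor_eigs lam d)"
proof -
  have inf: "infinite (tuples d)"
  proof
    assume "finite (tuples d)"
    hence "finite (hd ` tuples d)" by simp
    moreover have "{1..} \<subseteq> hd ` tuples d"
    proof
      fix k :: nat assume k: "k \<in> {1..}"
      have "k # replicate (d - 1) 1 \<in> tuples d" using k d by (auto simp: tuples_def)
      thus "k \<in> hd ` tuples d" by force
    qed
    ultimately show False using infinite_Ici[of "1::nat"] finite_subset by blast
  qed
  have fin: "finite {t\<in>tuples d. tuple_weight p t \<ge> \<tau>}" if tau: "\<tau> > 0" for \<tau>
  proof -
    define K where "K = nat \<lceil>1 / \<tau>\<rceil>"
    have small: "p j < \<tau>" if "K < j" for j
    proof -
      have "1 / \<tau> < real j" using that unfolding K_def by linarith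
      hence "1 / real j < \<tau>" using tau that by (simp add: field_simps)
      thus ?thesis using p_le_inverse[of j] that by linarith
    qed
    have "{t\<in>tuples d. tuple_weight p t \<ge> \<tau>} \<subseteq> {xs. set xs \<subseteq> {1..K} \<and> length xs = d}"
    proof safe
      fix t x assume t: "t \<in> tuples d" "\<tau> \<le> tuple_weight p t" and x: "x \<in> set t"
      have "\<tau> \<le> p x" using weight_le_entry[OF t(1) x] t(2) by linarith
      hence "x \<le> K" using small[of x] by linarith
      thus "x \<in> {1..K}" using t x by (auto simp: tuples_def)
    qed (simp add: tuples_def)
    thus ?thesis by (rule finite_subset) (simp add: finite_lists_length_eq)
  qed
  obtain \<sigma>0 where s0: "bij_betw \<sigma>0 UNIV (tuples d)"
      "\<forall>n. tuple_weight p (\<sigma>0 (Suc n)) \<le> tuple_weight p (\<sigma>0 n)"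
    using decreasing_enumeration_exists[OF inf fin] weight_pos by (force simp: tuples_def)
  define \<sigma> where "\<sigma> k = \<sigma>0 (k - 1)" for k
  define mu where "mu k = prod_list (map lam (\<sigma> k))" for k
  have "bij_betw (\<lambda>k::nat. k - 1) {1..} UNIV"
    by (rule bij_betwI[where g = Suc]) auto
  hence "bij_betw \<sigma> {1..} (tuples d)"
    unfolding \<sigma>_def using bij_betw_trans s0(1) by (simp add: comp_def)
  moreover have "\<forall>k\<ge>1. mu (Suc k) \<le> mu k"
  proof safe
    fix k :: nat assume k: "1 \<le> k"
    have l: "length (\<sigma> j) = d" for j using s0(1) unfolding \<sigma>_def
      by (auto simp: bij_betw_def tuples_def)
    have "tuple_weight p (\<sigma> (Suc k)) \<le> tuple_weight p (\<sigma> k)"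
      using s0(2)[rule_format, of "k - 1"] k by (simp add: \<sigma>_def)
    thus "mu (Suc k) \<le> mu k" unfolding mu_def using prod_list_scaled[OF lam_eq] l T_pos
      by (simp add: mult_left_mono)
  qed
  ultimately have "is_decr_rearr lam d mu" unfolding is_decr_rearr_def mu_def by blast
  thus ?thesis unfolding tensor_eigs_def by (rule someI[where P = "is_decr_rearr lam d"])
qed

end

locale tensor_power = tensor_setting p lam T for p lam T +
  fixes d :: nat and \<sigma> :: "nat \<Rightarrow> nat list"
  assumes d_pos: "1 \<le> d" and \<sigma>_bij: "bij_betw \<sigma> {1..} (tuples d)"
    and eigs_eq: "\<forall>k\<ge>1. tensor_eigs lam d k = prod_list (map lam (\<sigma> k))"
    and eigs_dec: "\<forall>k\<ge>1. tensor_eigs lam d (Suc k) \<le> tensor_eigs lam d k"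
begin

definition q where "q k = tensor_eigs lam d k / T ^ d"

lemma \<sigma>_length: "k \<ge> 1 \<Longrightarrow> length (\<sigma> k) = d"
  using \<sigma>_bij by (auto simp: bij_betw_def tuples_def)

lemma \<sigma>_tuples: "k \<ge> 1 \<Longrightarrow> \<sigma> k \<in> tuples d"
  using \<sigma>_bij by (auto simp: bij_betw_def)

lemma q_eq: "k \<ge> 1 \<Longrightarrow> q k = tuple_weight p (\<sigma> k)"
  unfolding q_def using eigs_eq prod_list_scaled[OF lam_eq] \<sigma>_length T_pos by simp

lemma q_dec: "\<forall>k\<ge>1. q (Suc k) \<le> q k"
  unfolding q_def using eigs_dec T_pos by (simp add: divide_right_mono)

lemma q_nonneg: "0 \<le> q (Suc j)"
  using q_eq[of "Suc j"] weight_nonneg[OF \<sigma>_tuples[of "Suc j"]] by simp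

lemma partial_sum_q: "(\<Sum>j<N. q (Suc j)) = sum (tuple_weight p) (\<sigma> ` {1..N})"
proof -
  have "(\<Sum>j<N. q (Suc j)) = sum q {1..N}" by (simp add: sum.atLeast1_atMost_eq)
  also have "\<dots> = sum (\<lambda>k. tuple_weight p (\<sigma> k)) {1..N}" by (intro sum.cong) (auto simp: q_eq)
  also have "\<dots> = sum (tuple_weight p) (\<sigma> ` {1..N})"
    using bij_betw_subset[OF \<sigma>_bij, of "{1..N}"] by (subst sum.reindex) (auto simp: bij_betw_def)
  finally show ?thesis .
qed

lemma box_weight: "sum (tuple_weight p) {xs. set xs \<subseteq> {1..K} \<and> length xs = d} = (1 - tail_mass p K) ^ d"
  using sum_prod_list_lists_length[of "{1..K}" p d]
  by (simp add: tuple_weight_def[abs_def] tail_mass_def sum.atLeast1_atMost_eq)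

lemma box_sub_tuples: "{xs. set xs \<subseteq> {1..K} \<and> length xs = d} \<subseteq> tuples d"
  by (auto simp: tuples_def)

lemma finite_weight_le_1:
  assumes "finite S" "S \<subseteq> tuples d"
  shows "sum (tuple_weight p) S \<le> 1"
proof -
  have "finite (\<Union>(set ` S))" using assms by simp
  then obtain K where K: "\<forall>n\<in>\<Union>(set ` S). n \<le> K" by (auto simp: finite_nat_set_iff_bounded_le)
  have sub: "S \<subseteq> {xs. set xs \<subseteq> {1..K} \<and> length xs = d}"
    using K assms(2) by (auto simp: tuples_def)
  have "sum (tuple_weight p) S \<le> sum (tuple_weight p) {xs. set xs \<subseteq> {1..K} \<and> length xs = d}"
    using box_sub_tuples weight_nonneg sub
    by (intro sum_mono2) (auto simp: finite_lists_length_eq)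
  also have "\<dots> = (1 - tail_mass p K) ^ d" by (rule box_weight)
  also have "\<dots> \<le> 1" using tail_mass_unit_interval[of K] by (intro power_le_one) auto
  finally show ?thesis .
qed

lemma partial_sum_q_le_1: "(\<Sum>j<N. q (Suc j)) \<le> 1"
  unfolding partial_sum_q using \<sigma>_tuples by (intro finite_weight_le_1) auto

lemma finite_weight_le_partial_sum:
  assumes "finite B" "B \<subseteq> tuples d"
  shows "\<exists>N. sum (tuple_weight p) B \<le> (\<Sum>j<N. q (Suc j))"
proof -
  let ?I = "inv_into {1..} \<sigma> ` B"
  have "finite ?I" using assms by simp
  then obtain N where N: "\<forall>n\<in>?I. n \<le> N" by (auto simp: finite_nat_set_iff_bounded_le)
  have "B \<subseteq> \<sigma> ` {1..N}"
  proof
    fix b assume b: "b \<in> B"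
    hence b': "b \<in> \<sigma> ` {1..}" using assms \<sigma>_bij by (auto simp: bij_betw_def)
    have "inv_into {1..} \<sigma> b \<in> {1..N}" using inv_into_into[OF b'] N b by auto
    thus "b \<in> \<sigma> ` {1..N}" using f_inv_into_f[OF b'] by (metis image_eqI)
  qed
  hence "sum (tuple_weight p) B \<le> sum (tuple_weight p) (\<sigma> ` {1..N})"
    by (intro sum_mono2) (auto intro: weight_nonneg[OF \<sigma>_tuples])
  thus ?thesis unfolding partial_sum_q by blast
qed

text \<open>The normalised tensor eigenvalues sum to 1: every finite box is eventually
  exhausted by partial sums, and the box weights \<open>(1 - R K)\<^sup>d\<close> tend to 1.\<close>

lemma q_sums_1: "(\<lambda>j. q (Suc j)) sums 1"
proof -
  have summable: "summable (\<lambda>j. q (Suc j))"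
  proof (rule bounded_imp_summable[where B = 1])
    show "(\<Sum>k\<le>n. q (Suc k)) \<le> 1" for n
      using partial_sum_q_le_1[of "Suc n"] by (simp add: lessThan_Suc_atMost)
  qed (rule q_nonneg)
  have "(\<lambda>K. 1 - (\<Sum>i<K. p (Suc i))) \<longlonglongrightarrow> 1 - 1"
    using p_sums unfolding sums_def by (intro tendsto_diff tendsto_const)
  hence "(\<lambda>K. tail_mass p K) \<longlonglongrightarrow> 0" by (simp add: tail_mass_def)
  hence lim: "(\<lambda>K. (1 - tail_mass p K) ^ d) \<longlonglongrightarrow> 1"
    using tendsto_power[OF tendsto_diff[OF tendsto_const[of 1]], of "tail_mass p" 0] by simp
  have "(1 - tail_mass p K) ^ d \<le> (\<Sum>j. q (Suc j))" for K
  proof -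
    obtain N where "(1 - tail_mass p K) ^ d \<le> (\<Sum>j<N. q (Suc j))"
      using finite_weight_le_partial_sum[OF _ box_sub_tuples, of K] box_weight[of K]
      by (auto simp: finite_lists_length_eq)
    also have "\<dots> \<le> (\<Sum>j. q (Suc j))" using summable q_nonneg by (intro sum_le_suminf) auto
    finally show ?thesis .
  qed
  hence "1 \<le> (\<Sum>j. q (Suc j))" by (intro LIMSEQ_le_const2[OF lim]) auto
  moreover have "(\<Sum>j. q (Suc j)) \<le> 1" using summable partial_sum_q_le_1 by (rule suminf_le_const)
  ultimately have "(\<Sum>j. q (Suc j)) = 1" by (rule antisym[rotated])
  thus ?thesis using summable by (simp add: sums_iff)
qed

lemma n_tensor_eq: "n_tensor lam d \<epsilon> = (LEAST n. 1 - (\<Sum>j<n. q (Suc j)) \<le> \<epsilon>\<^sup>2)"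
proof -
  have "(\<Sum>j. q (Suc n + j)) = 1 - (\<Sum>j<n. q (Suc j))" for n
  proof -
    have "(\<lambda>j. q (Suc (j + n))) = (\<lambda>j. q (Suc n + j))" by (simp add: add.commute)
    thus ?thesis
      using suminf_split_initial_segment[OF sums_summable[OF q_sums_1], of n] q_sums_1
      by (simp add: sums_iff)
  qed
  thus ?thesis unfolding n_tensor_def trace_eq q_def[symmetric] by simp
qed

text \<open>Upper bound: the \<open>m\<^sup>d\<close> multi-indices in the box \<open>{1..m}\<^sup>d\<close> already carry mass
  \<open>(1 - R m)\<^sup>d\<close>, and the first \<open>m\<^sup>d\<close> eigenvalues carry at least as much.\<close>

lemma n_tensor_upper:
  assumes m: "1 \<le> m" and h: "1 - \<epsilon>\<^sup>2 \<le> (1 - tail_mass p m) ^ d"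
  shows "n_tensor lam d \<epsilon> \<le> m ^ d"
proof -
  let ?B = "{xs. set xs \<subseteq> {1..m} \<and> length xs = d}"
  let ?I = "inv_into {1..} \<sigma> ` ?B"
  have Bsub: "?B \<subseteq> \<sigma> ` {1..}" using box_sub_tuples \<sigma>_bij by (auto simp: bij_betw_def)
  have inj: "inj_on (inv_into {1..} \<sigma>) ?B" using Bsub by (rule inj_on_inv_into)
  have cI: "card ?I = m ^ d" using card_image[OF inj] card_lists_length_eq[of "{1..m}" d] by simp
  have Isub: "?I \<subseteq> {1..}" using Bsub inv_into_into[of _ \<sigma> "{1..}"] by blast
  have "sum q ?I = sum (\<lambda>b. q (inv_into {1..} \<sigma> b)) ?B" using inj by (simp add: sum.reindex)
  also have "\<dots> = sum (tuple_weight p) ?B"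
  proof (rule sum.cong)
    fix b assume "b \<in> ?B"
    hence b: "b \<in> \<sigma> ` {1..}" using Bsub by blast
    show "q (inv_into {1..} \<sigma> b) = tuple_weight p b"
      using q_eq[OF inv_into_into[OF b, unfolded atLeast_iff]] f_inv_into_f[OF b] by simp
  qed simp
  also have "\<dots> = (1 - tail_mass p m) ^ d" by (rule box_weight)
  finally have "sum q ?I = (1 - tail_mass p m) ^ d" .
  moreover have "sum q ?I \<le> (\<Sum>j<m ^ d. q (Suc j))"
    using sum_le_initial_segment[OF q_dec _ Isub cI]
    by (simp add: finite_lists_length_eq sum.atLeast1_atMost_eq)
  ultimately have "1 - (\<Sum>j<m ^ d. q (Suc j)) \<le> \<epsilon>\<^sup>2" using h by linarith
  thus ?thesis unfolding n_tensor_eq by (rule Least_le)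
qed

text \<open>Lower bound: among the first \<open>n\<^sub>d\<close> multi-indices, those inside the box
  \<open>{1..m-1}\<^sup>d\<close> carry at most \<open>(1 - R (m-1))\<^sup>d\<close>, and each of the others has an entry
  \<open>\<ge> m\<close>, hence weight \<open>\<le> p m\<close>.\<close>

lemma n_tensor_lower:
  assumes e: "0 < \<epsilon>" and m: "1 \<le> m"
  shows "1 - \<epsilon>\<^sup>2 \<le> (1 - tail_mass p (m - 1)) ^ d + real (n_tensor lam d \<epsilon>) * p m"
proof -
  have "(\<lambda>n. 1 - (\<Sum>j<n. q (Suc j))) \<longlonglongrightarrow> 1 - 1"
    using q_sums_1 unfolding sums_def by (intro tendsto_diff tendsto_const)
  hence "eventually (\<lambda>n. 1 - (\<Sum>j<n. q (Suc j)) < \<epsilon>\<^sup>2) sequentially"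
    using e by (intro order_tendstoD(2)) auto
  hence ex: "\<exists>n. 1 - (\<Sum>j<n. q (Suc j)) \<le> \<epsilon>\<^sup>2"
    by (auto simp: eventually_sequentially intro: less_imp_le)
  define n where "n = n_tensor lam d \<epsilon>"
  have pn: "1 - \<epsilon>\<^sup>2 \<le> (\<Sum>j<n. q (Suc j))"
    using LeastI_ex[OF ex] unfolding n_def n_tensor_eq by linarith
  let ?B = "{xs. set xs \<subseteq> {1..m - 1} \<and> length xs = d}"
  define I1 where "I1 = {k\<in>{1..n}. \<sigma> k \<in> ?B}"
  define I2 where "I2 = {k\<in>{1..n}. \<sigma> k \<notin> ?B}"
  have split: "(\<Sum>j<n. q (Suc j)) = sum q I1 + sum q I2"
  proof -
    have "(\<Sum>j<n. q (Suc j)) = sum q {1..n}" by (simp add: sum.atLeast1_atMost_eq)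
    also have "{1..n} = I1 \<union> I2" by (auto simp: I1_def I2_def)
    also have "sum q (I1 \<union> I2) = sum q I1 + sum q I2"
      by (rule sum.union_disjoint) (auto simp: I1_def I2_def)
    finally show ?thesis .
  qed
  have "sum q I1 = sum (tuple_weight p) (\<sigma> ` I1)"
    using inj_on_subset[of \<sigma> "{1..}" I1] \<sigma>_bij
    by (subst sum.reindex) (auto simp: I1_def q_eq bij_betw_def)
  also have "\<dots> \<le> sum (tuple_weight p) ?B"
    using box_sub_tuples[of "m - 1"] weight_nonneg
    by (intro sum_mono2) (auto simp: I1_def finite_lists_length_eq)
  also have "\<dots> = (1 - tail_mass p (m - 1)) ^ d" by (rule box_weight)
  finally have s1: "sum q I1 \<le> (1 - tail_mass p (m - 1)) ^ d" .
  have "q k \<le> p m" if k: "k \<in> I2" for k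
  proof -
    have k1: "1 \<le> k" and tk: "\<sigma> k \<in> tuples d" and nB: "\<sigma> k \<notin> ?B"
      using k \<sigma>_tuples by (auto simp: I2_def)
    then obtain j where j: "j \<in> set (\<sigma> k)" "m \<le> j"
      by (auto simp: tuples_def subset_iff not_le)
    have "q k = tuple_weight p (\<sigma> k)" using q_eq k1 by simp
    also have "\<dots> \<le> p j" using weight_le_entry[OF tk j(1)] .
    also have "\<dots> \<le> p m" using antimono_from_one[OF p_dec m j(2)] .
    finally show "q k \<le> p m" .
  qed
  hence "sum q I2 \<le> real (card I2) * p m" using sum_bounded_above[of I2 q "p m"] by simp
  also have "\<dots> \<le> real n * p m"
  proof -
    have "card I2 \<le> card {1..n}" by (rule card_mono) (auto simp: I2_def)
    thus ?thesis using p_pos m by (intro mult_right_mono) (auto simp: less_imp_le)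
  qed
  finally show ?thesis using pn split s1 unfolding n_def by linarith
qed

end

context tensor_setting
begin

lemma tensor_power_exists:
  assumes "1 \<le> d"
  obtains \<sigma> where "tensor_power p lam T d \<sigma>"
proof -
  from tensor_eigs_rearrangement[OF assms] obtain \<sigma> where
    "bij_betw \<sigma> {1..} (tuples d)" "\<forall>k\<ge>1. tensor_eigs lam d k = prod_list (map lam (\<sigma> k))"
    "\<forall>k\<ge>1. tensor_eigs lam d (Suc k) \<le> tensor_eigs lam d k"
    unfolding is_decr_rearr_def by blast
  thus ?thesis using that tensor_setting_axioms assms
    unfolding tensor_power_def tensor_power_axioms_def by blast
qed

lemma n_tensor_le_power:
  assumes d: "1 \<le> d" and m: "1 \<le> m" and R: "real d * tail_mass p m \<le> a" and a: "a \<le> real d"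
    and h: "1 - \<epsilon>\<^sup>2 \<le> (1 - a / real d) ^ d"
  shows "n_tensor lam d \<epsilon> \<le> m ^ d"
proof -
  obtain \<sigma> where P: "tensor_power p lam T d \<sigma>" using tensor_power_exists[OF d] .
  have "(1 - a / real d) ^ d \<le> (1 - tail_mass p m) ^ d"
    using R a d by (intro power_mono) (auto simp: field_simps)
  hence "1 - \<epsilon>\<^sup>2 \<le> (1 - tail_mass p m) ^ d" using h by linarith
  with P m show ?thesis by (rule tensor_power.n_tensor_upper)
qed

lemma n_tensor_ge_linear:
  assumes e: "0 < \<epsilon>" and d: "1 \<le> d" and m: "1 \<le> m"
    and R: "a \<le> real d * tail_mass p (m - 1)"
  shows "(1 - \<epsilon>\<^sup>2) - exp (- a) \<le> real (n_tensor lam d \<epsilon>) / real m"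
proof -
  obtain \<sigma> where P: "tensor_power p lam T d \<sigma>" using tensor_power_exists[OF d] .
  have "(1 - tail_mass p (m - 1)) ^ d \<le> exp (- tail_mass p (m - 1)) ^ d"
    using tail_mass_unit_interval[of "m - 1"] exp_ge_add_one_self[of "- tail_mass p (m - 1)"]
    by (intro power_mono) auto
  also have "\<dots> = exp (real d * (- tail_mass p (m - 1)))" by (rule exp_of_nat_mult[symmetric])
  also have "\<dots> \<le> exp (- a)" using R by simp
  finally have "1 - \<epsilon>\<^sup>2 - exp (- a) \<le> real (n_tensor lam d \<epsilon>) * p m"
    using tensor_power.n_tensor_lower[OF P e m] by linarith
  also have "\<dots> \<le> real (n_tensor lam d \<epsilon>) / real m"
    using p_le_inverse[OF m] by (simp add: divide_inverse mult_left_mono)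
  finally show ?thesis .
qed

end

lemma asymp_equiv_eventually_between:
  fixes f g :: "'a \<Rightarrow> real"
  assumes fg: "f \<sim>[F] g" and g: "eventually (\<lambda>x. 0 < g x) F" and \<delta>: "0 < \<delta>"
  shows "eventually (\<lambda>x. (1 - \<delta>) * g x \<le> f x \<and> f x \<le> (1 + \<delta>) * g x) F"
proof -
  have lim: "((\<lambda>x. if f x = 0 \<and> g x = 0 then 1 else f x / g x) \<longlongrightarrow> 1) F"
    using asymp_equivD[OF fg] .
  have "eventually (\<lambda>x. 1 - \<delta> < (if f x = 0 \<and> g x = 0 then 1 else f x / g x)) F"
    using order_tendstoD(1)[OF lim] \<delta> by simp
  moreover have "eventually (\<lambda>x. (if f x = 0 \<and> g x = 0 then 1 else f x / g x) < 1 + \<delta>) F"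
    using order_tendstoD(2)[OF lim] \<delta> by simp
  ultimately show ?thesis using g
  proof eventually_elim
    case (elim x)
    hence "1 - \<delta> < f x / g x" "f x / g x < 1 + \<delta>" by auto
    thus ?case using elim(3) by (simp add: less_divide_eq divide_less_eq less_imp_le)
  qed
qed

lemma antimono_eventually_pos:
  fixes f :: "nat \<Rightarrow> real"
  assumes dec: "\<forall>k\<ge>1. f (Suc k) \<le> f k" and ev: "eventually (\<lambda>k. 0 < f k) at_top"
  shows "\<forall>k\<ge>1. 0 < f k"
proof safe
  fix k :: nat assume k: "1 \<le> k"
  obtain K where K: "\<forall>j\<ge>K. 0 < f j" using ev unfolding eventually_at_top_linorder by blast
  have "f (max k K) \<le> f k" using antimono_from_one[OF dec k, of "max k K"] by simp
  thus "0 < f k" using K by (meson max.cobounded2 less_le_trans)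
qed

lemma powr_at_top:
  assumes "(r::real) > 0"
  shows "filterlim (\<lambda>x. x powr r) at_top at_top"
proof (subst filterlim_cong[OF refl refl])
  show "LIM x at_top. exp (r * ln x) :> at_top"
    by (rule filterlim_compose[OF exp_at_top filterlim_tendsto_pos_mult_at_top[OF tendsto_const]])
       (simp_all add: ln_at_top assms)
  show "eventually (\<lambda>x. x powr r = exp (r * ln x)) at_top"
    using eventually_gt_at_top[of 0] by eventually_elim (simp add: powr_def)
qed

lemma asymp_equiv_squeeze:
  fixes f L E :: "nat \<Rightarrow> real"
  assumes L: "filterlim L at_top sequentially" and E: "(\<lambda>d. E d / L d) \<longlonglongrightarrow> 0"
    and bounds: "\<And>\<eta>. 0 < \<eta> \<Longrightarrow> \<eta> < 1 \<Longrightarrow>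
      eventually (\<lambda>d. (1 - \<eta>) * L d - E d \<le> f d \<and> f d \<le> (1 + \<eta>) * L d + E d) sequentially"
  shows "f \<sim>[sequentially] L"
proof (rule asymp_equivI'[OF tendstoI])
  fix e :: real assume e: "0 < e"
  define \<eta> where "\<eta> = min (e / 2) (1 / 2)"
  have \<eta>: "0 < \<eta>" "\<eta> < 1" "\<eta> \<le> e / 2" using e by (auto simp: \<eta>_def)
  have "eventually (\<lambda>d. 0 < L d) sequentially" using L by (simp add: filterlim_at_top_dense)
  moreover have "eventually (\<lambda>d. dist (E d / L d) 0 < e / 2) sequentially"
    by (rule tendstoD[OF E]) (use e in simp)
  moreover note bounds[OF \<eta>(1,2)]
  ultimately show "eventually (\<lambda>d. dist (f d / L d) 1 < e) sequentially"
  proof eventually_elim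
    case (elim d)
    have "((1 - \<eta>) * L d - E d) / L d \<le> f d / L d" "f d / L d \<le> ((1 + \<eta>) * L d + E d) / L d"
      using elim(1,3) by (auto intro: divide_right_mono)
    moreover have "((1 - \<eta>) * L d - E d) / L d = (1 - \<eta>) - E d / L d"
      "((1 + \<eta>) * L d + E d) / L d = (1 + \<eta>) + E d / L d"
      using elim(1) by (simp_all add: field_simps)
    moreover have "\<bar>E d / L d\<bar> < e / 2" using elim(2) by (simp only: dist_real_def diff_zero)
    ultimately show ?case using \<eta>(3) unfolding dist_real_def abs_less_iff by linarith
  qed
qed

lemma lnln_ceiling_exp_exp:
  assumes y: "0 \<le> y" and m: "m = nat \<lceil>exp (exp y)\<rceil>"
  shows "y \<le> ln (ln (real m))" "ln (ln (real m)) \<le> y + ln 2" "exp (exp y) \<le> real m"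
proof -
  let ?x = "exp (exp y)"
  have x1: "1 \<le> ?x" using y by simp
  have rm: "real m = of_int \<lceil>?x\<rceil>" using m x1 by simp
  have mx: "?x \<le> real m" "real m \<le> 2 * ?x" using rm x1 by linarith+
  have m0: "0 < real m" using mx x1 by linarith
  have lm: "exp y \<le> ln (real m)" using mx m0 by (subst ln_ge_iff) auto
  have lm0: "0 < ln (real m)" using lm exp_gt_zero[of y] by linarith
  show "y \<le> ln (ln (real m))" using lm lm0 by (subst ln_ge_iff) auto
  have "ln (real m) \<le> ln (2 * ?x)" using mx m0 by (subst ln_le_cancel_iff) auto
  also have "\<dots> = ln 2 + exp y" by (simp add: ln_mult)
  also have "\<dots> \<le> 2 * exp y" using ln_2_less_1 one_le_exp_iff[THEN iffD2, OF y] by linarith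
  finally have "ln (ln (real m)) \<le> ln (2 * exp y)" using lm0 by (subst ln_le_cancel_iff) auto
  thus "ln (ln (real m)) \<le> y + ln 2" by (simp add: ln_mult)
  show "exp (exp y) \<le> real m" by (rule mx)
qed

lemma lnln_floor_exp_exp:
  assumes y: "0 \<le> y" and x2: "2 \<le> exp (exp y)" and m: "m = nat \<lfloor>exp (exp y)\<rfloor>"
  shows "ln (ln (real m)) \<le> y" "exp (exp y) / 2 \<le> real m" "exp (exp y) - 1 \<le> real m"
proof -
  let ?x = "exp (exp y)"
  have f2: "2 \<le> \<lfloor>?x\<rfloor>" using x2 by (simp add: le_floor_iff)
  have rm: "real m = of_int \<lfloor>?x\<rfloor>" using m f2 by simp
  have a: "?x - 1 \<le> real m" "real m \<le> ?x" "2 \<le> real m" using rm f2 by linarith+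
  show "?x - 1 \<le> real m" "?x / 2 \<le> real m" using a x2 by linarith+
  have "ln (real m) \<le> exp y" using a ln_le_cancel_iff[of "real m" ?x] by simp
  moreover have "0 < ln (real m)" using a by simp
  ultimately have "ln (ln (real m)) \<le> ln (exp y)" by (subst ln_le_cancel_iff) auto
  thus "ln (ln (real m)) \<le> y" by simp
qed

lemma lnln_ge_of_linear_bound:
  assumes k: "0 < \<kappa>" and m: "exp (exp y) / 2 \<le> real m"
    and ey: "2 * (ln 2 - ln \<kappa>) \<le> exp y" and n: "\<kappa> * real m \<le> real n"
  shows "1 < real n" "y - ln 2 \<le> ln (ln (real n))"
proof -
  have "0 < exp (exp y) / 2" by simp
  hence m0: "0 < real m" using m by linarith
  have "ln (exp (exp y) / 2) \<le> ln (real m)" using m m0 by (subst ln_le_cancel_iff) auto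
  hence lm: "exp y - ln 2 \<le> ln (real m)" by (simp add: ln_div)
  have "0 < \<kappa> * real m" using k m0 by simp
  hence n0: "0 < real n" using n by linarith
  have "ln (\<kappa> * real m) \<le> ln (real n)" using n k m0 n0 by (subst ln_le_cancel_iff) auto
  hence "ln \<kappa> + ln (real m) \<le> ln (real n)" using k m0 by (simp add: ln_mult)
  hence ln2: "exp y / 2 \<le> ln (real n)" using lm ey by argo
  moreover have "0 < exp y / 2" by simp
  ultimately have lnp: "0 < ln (real n)" by linarith
  thus "1 < real n" using n0 by simp
  have "ln (exp y / 2) \<le> ln (ln (real n))" using ln2 lnp by (subst ln_le_cancel_iff) auto
  thus "y - ln 2 \<le> ln (ln (real n))" by (simp add: ln_div)
qed

lemma lnln_le_of_power_bound:
  assumes n: "n \<le> m ^ d" and n1: "1 < real n" and m1: "1 < real m" and d: "1 \<le> d"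
  shows "ln (ln (real n)) \<le> ln (real d) + ln (ln (real m))"
proof -
  have lm: "0 < ln (real m)" using m1 by simp
  have "ln (real n) \<le> ln (real (m ^ d))" using n n1 m1 by (subst ln_le_cancel_iff) auto
  also have "\<dots> = real d * ln (real m)" by (simp add: ln_realpow)
  finally have "ln (ln (real n)) \<le> ln (real d * ln (real m))"
    using n1 lm d by (subst ln_le_cancel_iff) auto
  also have "\<dots> = ln (real d) + ln (ln (real m))" using lm d by (simp add: ln_mult)
  finally show ?thesis .
qed

locale prop11_setting = tensor_setting p lam T for p lam T +
  fixes \<beta> s \<epsilon> :: real
  assumes \<beta>_pos: "0 < \<beta>" and s_pos: "0 < s" and \<epsilon>_pos: "0 < \<epsilon>" and \<epsilon>_lt_1: "\<epsilon> < 1"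
    and p_asymp: "p \<sim>[at_top] (\<lambda>k. \<beta> * ll_density s (real k))"
begin

definition c where "c = \<bar>ln (1 - \<epsilon>\<^sup>2)\<bar>"

definition L :: "nat \<Rightarrow> real" where "L d = (\<beta> * real d / (s * c)) powr (1 / s)"

lemma c_pos: "0 < c" and exp_neg_c: "exp (- c) = 1 - \<epsilon>\<^sup>2"
proof -
  have e: "0 < 1 - \<epsilon>\<^sup>2" "1 - \<epsilon>\<^sup>2 < 1"
    using \<epsilon>_pos \<epsilon>_lt_1 by (auto simp: power_less_one_iff)
  thus "0 < c" "exp (- c) = 1 - \<epsilon>\<^sup>2" by (simp_all add: c_def ln_less_zero)
qed

lemma L_pos: "1 \<le> d \<Longrightarrow> 0 < L d"
  using \<beta>_pos s_pos c_pos by (simp add: L_def)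

lemma L_at_top: "filterlim L at_top sequentially"
proof -
  have "filterlim (\<lambda>d::nat. \<beta> / (s * c) * real d) at_top sequentially"
    using \<beta>_pos s_pos c_pos
    by (intro filterlim_tendsto_pos_mult_at_top[OF tendsto_const _ filterlim_real_sequentially]) simp
  from filterlim_compose[OF powr_at_top this] show ?thesis
    using s_pos unfolding L_def by simp
qed

lemma log_over_L: "(\<lambda>d. (ln (real d) + ln 2) / L d) \<longlonglongrightarrow> 0"
proof -
  have "(\<lambda>d. (ln (real d) / real d powr (1 / s)) / (\<beta> / (s * c)) powr (1 / s)) \<longlonglongrightarrow> 0 / (\<beta> / (s * c)) powr (1 / s)"
    using lim_ln_over_power[of "1 / s"] s_pos \<beta>_pos c_pos by (intro tendsto_divide) auto
  moreover have "(\<lambda>d. (ln (real d) / real d powr (1 / s)) / (\<beta> / (s * c)) powr (1 / s)) =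
      (\<lambda>d. ln (real d) / L d)"
  proof
    fix d :: nat
    have "\<beta> * real d / (s * c) = real d * (\<beta> / (s * c))" by simp
    thus "(ln (real d) / real d powr (1 / s)) / (\<beta> / (s * c)) powr (1 / s) = ln (real d) / L d"
      unfolding L_def using \<beta>_pos s_pos c_pos by (simp only: powr_mult) simp
  qed
  ultimately have "(\<lambda>d. ln (real d) / L d) \<longlonglongrightarrow> 0" by simp
  moreover have "(\<lambda>d. ln 2 / L d) \<longlonglongrightarrow> 0"
    by (rule tendsto_divide_0[OF tendsto_const filterlim_at_top_imp_at_infinity[OF L_at_top]])
  ultimately show ?thesis using tendsto_add by (fastforce simp: add_divide_distrib)
qed

lemma profile_at_scale:
  assumes a: "0 < a" and d: "1 \<le> d"
  shows "\<beta> * ((a * L d) powr (- s) / s) = c / (a powr s * real d)"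
proof -
  have "(a * L d) powr s = a powr s * (\<beta> * real d / (s * c))"
    using a d \<beta>_pos s_pos c_pos by (simp add: L_def powr_mult powr_powr)
  hence "(a * L d) powr (- s) = 1 / (a powr s * (\<beta> * real d / (s * c)))"
    by (simp add: powr_minus divide_inverse)
  moreover have "0 < a powr s" using a by simp
  ultimately show ?thesis using d \<beta>_pos s_pos c_pos by (simp add: field_simps)
qed

lemma profile_bounds:
  assumes "0 < \<delta>"
  shows "\<exists>M\<ge>4. \<forall>k\<ge>M. (1 - \<delta>) * \<beta> * ll_density s (real k) \<le> p k \<and>
                        p k \<le> (1 + \<delta>) * \<beta> * ll_density s (real k)"
proof -
  have "eventually (\<lambda>k::nat. 0 < \<beta> * ll_density s (real k)) at_top"
    using eventually_ge_at_top[of "4::nat"] by eventually_elim (use \<beta>_pos ll_density_pos in auto)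
  from asymp_equiv_eventually_between[OF p_asymp this assms]
  obtain M where "\<forall>k\<ge>M. (1 - \<delta>) * \<beta> * ll_density s (real k) \<le> p k \<and>
                        p k \<le> (1 + \<delta>) * \<beta> * ll_density s (real k)"
    unfolding eventually_at_top_linorder by (auto simp: mult.assoc)
  thus ?thesis by (intro exI[of _ "max M 4"]) auto
qed

lemma tail_mass_at_level_lower:
  assumes a: "0 < a" and d: "1 \<le> d" and \<delta>: "\<delta> < 1"
    and M: "4 \<le> M" "\<forall>k\<ge>M. (1 - \<delta>) * \<beta> * ll_density s (real k) \<le> p k"
    and m: "M + 1 \<le> m" and level: "ln (ln (real m)) \<le> a * L d"
  shows "(1 - \<delta>) * c / (a powr s * real d) \<le> tail_mass p (m - 1)"
proof -
  have "4 \<le> real m" using m M(1) by simp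
  hence lnln: "0 < ln (ln (real m))" using ln_ln_pos by blast
  have "(1 - \<delta>) * c / (a powr s * real d) = (1 - \<delta>) * (\<beta> * ((a * L d) powr (- s) / s))"
    using profile_at_scale[OF a d] by simp
  also have "\<dots> \<le> (1 - \<delta>) * (\<beta> * ll_tail s (real m))"
    using ll_tail_ge[OF s_pos lnln level] \<delta> \<beta>_pos by (intro mult_left_mono) auto
  also have "\<dots> \<le> tail_mass p (m - 1)"
    using tail_mass_lower[OF s_pos M(1) _ M(2), of "m - 1"] \<delta> \<beta>_pos m by (simp add: mult.assoc)
  finally show ?thesis .
qed

lemma tail_mass_at_level_upper:
  assumes a: "0 < a" and d: "1 \<le> d" and \<delta>: "0 < \<delta>"
    and M: "4 \<le> M" "\<forall>k\<ge>M. p k \<le> (1 + \<delta>) * \<beta> * ll_density s (real k)"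
    and m: "M \<le> m" and level: "a * L d \<le> ln (ln (real m))"
  shows "tail_mass p m \<le> (1 + \<delta>) * c / (a powr s * real d)"
proof -
  have "tail_mass p m \<le> (1 + \<delta>) * (\<beta> * ll_tail s (real m))"
    using tail_mass_upper[OF s_pos M(1) _ M(2) m] \<delta> \<beta>_pos by (simp add: mult.assoc)
  also have "\<dots> \<le> (1 + \<delta>) * (\<beta> * ((a * L d) powr (- s) / s))"
    using ll_tail_le[OF s_pos _ level] a L_pos[OF d] \<delta> \<beta>_pos by (intro mult_left_mono) auto
  also have "\<dots> = (1 + \<delta>) * c / (a powr s * real d)"
    using profile_at_scale[OF a d] by simp
  finally show ?thesis .
qed

text \<open>At the level \<open>y = (1-\<eta>) L(d)\<close> take \<open>m = \<lfloor>exp (exp y)\<rfloor>\<close>.  Since the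
  profile tail at that level is \<open>c/((1-\<eta>)\<^sup>s d)\<close>, \<open>d R (m-1)\<close> exceeds \<open>\<rho> c\<close> for some
  \<open>\<rho> > 1\<close>, so \<open>n\<^sub>d \<ge> \<kappa> m\<close> with \<open>\<kappa> = e\<^sup>-\<^sup>c - e\<^sup>-\<^sup>\<rho>\<^sup>c > 0\<close>, and \<open>ln ln n\<^sub>d \<ge> y - ln 2\<close>.\<close>

lemma lnln_n_tensor_lower:
  assumes \<eta>: "0 < \<eta>" "\<eta> < 1"
  shows "eventually (\<lambda>d. 1 < real (n_tensor lam d \<epsilon>) \<and>
           (1 - \<eta>) * L d - ln 2 \<le> ln (ln (real (n_tensor lam d \<epsilon>)))) sequentially"
proof -
  define \<delta> where "\<delta> = (1 - (1 - \<eta>) powr s) / 2"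
  have pw: "0 < (1 - \<eta>) powr s" "(1 - \<eta>) powr s < 1"
    using powr_less_mono2[of s "1 - \<eta>" 1] \<eta> s_pos by simp_all
  have \<delta>: "0 < \<delta>" "\<delta> < 1" using pw unfolding \<delta>_def by argo+
  define \<rho> where "\<rho> = (1 - \<delta>) / (1 - \<eta>) powr s"
  have \<rho>: "1 < \<rho>" using pw by (simp add: \<rho>_def \<delta>_def field_simps)
  define \<kappa> where "\<kappa> = exp (- c) - exp (- (\<rho> * c))"
  have \<kappa>: "0 < \<kappa>" using \<rho> c_pos by (simp add: \<kappa>_def)
  obtain M where M: "4 \<le> M" "\<forall>k\<ge>M. (1 - \<delta>) * \<beta> * ll_density s (real k) \<le> p k"
    using profile_bounds[OF \<delta>(1)] by blast
  define Y where "Y = ln (real M + 4 + 2 * \<bar>ln \<kappa>\<bar>)"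
  have "eventually (\<lambda>d. Y / (1 - \<eta>) \<le> L d) sequentially" using L_at_top by (simp add: filterlim_at_top)
  with eventually_ge_at_top[of "1::nat"] show ?thesis
  proof eventually_elim
    case (elim d)
    define y where "y = (1 - \<eta>) * L d"
    have "Y \<le> y" using elim(2) \<eta> by (simp add: y_def field_simps)
    hence "exp Y \<le> exp y" by simp
    hence y: "0 < y" "real M + 4 + 2 * \<bar>ln \<kappa>\<bar> \<le> exp y"
      using L_pos[OF elim(1)] \<eta> by (simp_all add: y_def Y_def)
    define m where "m = nat \<lfloor>exp (exp y)\<rfloor>"
    have xx: "1 + exp y \<le> exp (exp y)" by (rule exp_ge_add_one_self)
    have x2: "2 \<le> exp (exp y)" using xx y(2) by linarith
    note hm = lnln_floor_exp_exp[OF less_imp_le[OF y(1)] x2 m_def]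
    have m: "M + 1 \<le> m" "1 \<le> m" using hm(3) xx y(2) by linarith+
    have "\<rho> * c / real d = (1 - \<delta>) * c / ((1 - \<eta>) powr s * real d)"
      by (simp add: \<rho>_def field_simps)
    also have "\<dots> \<le> tail_mass p (m - 1)"
      using tail_mass_at_level_lower[OF _ elim(1) \<delta>(2) M m(1)] hm(1) \<eta> by (simp add: y_def)
    finally have "\<rho> * c \<le> real d * tail_mass p (m - 1)" using elim(1) by (simp add: field_simps)
    from n_tensor_ge_linear[OF \<epsilon>_pos elim(1) m(2) this]
    have "\<kappa> \<le> real (n_tensor lam d \<epsilon>) / real m" by (simp add: \<kappa>_def exp_neg_c)
    hence "\<kappa> * real m \<le> real (n_tensor lam d \<epsilon>)" using m by (simp add: pos_le_divide_eq)
    moreover have "2 * (ln 2 - ln \<kappa>) \<le> exp y"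
      using y(2) ln_2_less_1 abs_ge_minus_self[of "ln \<kappa>"] of_nat_0_le_iff[of M, where 'a = real]
      by argo
    ultimately show ?case using lnln_ge_of_linear_bound[OF \<kappa> hm(2)] by (simp add: y_def)
  qed
qed

text \<open>At the level \<open>y = (1+\<eta>) L(d)\<close> take \<open>m = \<lceil>exp (exp y)\<rceil>\<close>; now
  \<open>d R m \<le> \<rho> c\<close> for some \<open>\<rho> < 1\<close>, and \<open>(1 - \<rho> c/d)\<^sup>d \<rightarrow> e\<^sup>-\<^sup>\<rho>\<^sup>c > 1 - \<epsilon>\<^sup>2\<close>, so eventually
  \<open>n\<^sub>d \<le> m\<^sup>d\<close>, i.e. \<open>ln ln n\<^sub>d \<le> ln d + ln ln m \<le> y + ln d + ln 2\<close>.\<close>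

lemma lnln_n_tensor_upper:
  assumes \<eta>: "0 < \<eta>"
  shows "eventually (\<lambda>d. 1 < real (n_tensor lam d \<epsilon>) \<longrightarrow>
           ln (ln (real (n_tensor lam d \<epsilon>))) \<le> (1 + \<eta>) * L d + (ln (real d) + ln 2)) sequentially"
proof -
  define \<delta> where "\<delta> = ((1 + \<eta>) powr s - 1) / 2"
  have pw: "1 < (1 + \<eta>) powr s" using powr_less_mono2[of s 1 "1 + \<eta>"] \<eta> s_pos by simp
  have \<delta>: "0 < \<delta>" using pw by (simp add: \<delta>_def)
  define \<rho> where "\<rho> = (1 + \<delta>) / (1 + \<eta>) powr s"
  have gen: "(1 + (a - 1) / 2) / a < 1 \<and> 0 < (1 + (a - 1) / 2) / a" if "1 < a" for a :: real
    using that by (auto simp: field_simps)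
  have \<rho>: "\<rho> < 1" "0 < \<rho>" unfolding \<rho>_def \<delta>_def using gen[OF pw] by blast+
  obtain M where M: "4 \<le> M" "\<forall>k\<ge>M. p k \<le> (1 + \<delta>) * \<beta> * ll_density s (real k)"
    using profile_bounds[OF \<delta>] by blast
  have "eventually (\<lambda>d. exp (- c) < (1 + (- (\<rho> * c)) / real d) ^ d) sequentially"
    by (rule order_tendstoD(1)[OF tendsto_exp_limit_sequentially]) (use \<rho> c_pos in simp)
  hence "eventually (\<lambda>d. 1 - \<epsilon>\<^sup>2 < (1 - \<rho> * c / real d) ^ d) sequentially"
    by (simp add: exp_neg_c)
  moreover have "eventually (\<lambda>d. ln (real M + 1) / (1 + \<eta>) \<le> L d) sequentially"
    using L_at_top by (simp add: filterlim_at_top)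
  moreover have "eventually (\<lambda>d. \<rho> * c + 1 \<le> real d) sequentially"
    using filterlim_real_sequentially by (simp add: filterlim_at_top)
  ultimately show ?thesis
  proof eventually_elim
    case (elim d)
    have "0 < \<rho> * c" using \<rho> c_pos by simp
    hence "1 \<le> real d" using elim(3) by linarith
    hence d: "1 \<le> d" by simp
    define y where "y = (1 + \<eta>) * L d"
    have "ln (real M + 1) \<le> y" using elim(2) \<eta> by (simp add: y_def field_simps)
    hence "real M + 1 \<le> exp y" by (subst ln_le_cancel_iff[symmetric]) auto
    hence y: "0 < y" "real M + 1 \<le> exp y" using L_pos[OF d] \<eta> by (simp_all add: y_def)
    define m where "m = nat \<lceil>exp (exp y)\<rceil>"
    note hm = lnln_ceiling_exp_exp[OF less_imp_le[OF y(1)] m_def]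
    have xx: "1 + exp y \<le> exp (exp y)" by (rule exp_ge_add_one_self)
    have m: "M \<le> m" "1 \<le> m" "1 < real m" using hm(3) xx y(2) M(1) by linarith+
    have "tail_mass p m \<le> (1 + \<delta>) * c / ((1 + \<eta>) powr s * real d)"
      using tail_mass_at_level_upper[OF _ d \<delta> M m(1)] hm(1) \<eta> by (simp add: y_def)
    also have "\<dots> = \<rho> * c / real d" by (simp add: \<rho>_def field_simps)
    finally have "real d * tail_mass p m \<le> \<rho> * c" using d by (simp add: field_simps)
    with d m(2) have N: "n_tensor lam d \<epsilon> \<le> m ^ d"
      using elim(1,3) by (intro n_tensor_le_power[where a = "\<rho> * c"]) auto
    show ?case
      using lnln_le_of_power_bound[OF N _ m(3) d] hm(2) by (auto simp: y_def)
  qed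
qed

lemma lnln_n_tensor_asymp: "(\<lambda>d. ln (ln (real (n_tensor lam d \<epsilon>)))) \<sim>[at_top] L"
proof (rule asymp_equiv_squeeze[OF L_at_top log_over_L])
  fix \<eta> :: real assume \<eta>: "0 < \<eta>" "\<eta> < 1"
  from lnln_n_tensor_lower[OF \<eta>] lnln_n_tensor_upper[OF \<eta>(1)]
  show "eventually (\<lambda>d. (1 - \<eta>) * L d - (ln (real d) + ln 2) \<le> ln (ln (real (n_tensor lam d \<epsilon>))) \<and>
      ln (ln (real (n_tensor lam d \<epsilon>))) \<le> (1 + \<eta>) * L d + (ln (real d) + ln 2)) sequentially"
  proof eventually_elim
    case (elim d)
    have "0 \<le> ln (real d)" by (cases "d = 0") auto
    thus ?case using elim by linarith
  qed
qed

end

text \<open>The hypotheses of Proposition 11 put the normalised eigenvalues \<open>lam k / T\<close> into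
  this setting: the trace \<open>T\<close> is positive, and positivity of all eigenvalues follows
  from monotonicity and the positive asymptotic profile.\<close>

lemma prop11_setting_intro:
  fixes lam :: "nat \<Rightarrow> real" and \<beta> s \<epsilon> :: real
  assumes nonneg: "\<forall>k\<ge>1. 0 \<le> lam k"
    and noninc: "\<forall>k\<ge>1. lam (Suc k) \<le> lam k"
    and summ: "summable (\<lambda>k. lam (Suc k))"
    and pos1: "lam 1 > 0"
    and beta: "\<beta> > 0" and s: "s > 0"
    and asym: "(\<lambda>k. lam k / trace_ev lam) \<sim>[at_top]
               (\<lambda>k. \<beta> / (real k * ln (real k) * ln (ln (real k)) powr (1 + s)))"
    and eps: "0 < \<epsilon>" "\<epsilon> < 1"
  shows "prop11_setting (\<lambda>k. lam k / trace_ev lam) lam (trace_ev lam) \<beta> s \<epsilon>"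
proof -
  define T where "T = trace_ev lam"
  define p where "p k = lam k / T" for k
  have "lam 1 \<le> T"
    using sum_le_suminf[OF summ, of "{..<1}"] nonneg by (auto simp: T_def trace_ev_def)
  hence T_pos: "0 < T" using pos1 by simp
  have p_asymp: "p \<sim>[at_top] (\<lambda>k. \<beta> * ll_density s (real k))"
    using asym unfolding p_def[abs_def] T_def by (simp add: ll_density_def)
  have "eventually (\<lambda>k::nat. 0 < \<beta> * ll_density s (real k)) at_top"
    using eventually_ge_at_top[of "4::nat"] by eventually_elim (use beta ll_density_pos in auto)
  with asymp_equiv_eventually_pos_iff[OF p_asymp] have "eventually (\<lambda>k. 0 < p k) at_top"
    by eventually_elim simp
  moreover have p_dec: "\<forall>k\<ge>1. p (Suc k) \<le> p k"
    using noninc T_pos by (simp add: p_def divide_right_mono)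
  ultimately have "\<forall>k\<ge>1. 0 < p k" by (rule antimono_eventually_pos[rotated])
  moreover have "(\<lambda>k. p (Suc k)) sums 1"
    using sums_divide[OF summable_sums[OF summ], of T] T_pos by (simp add: p_def T_def trace_ev_def)
  ultimately show ?thesis
    using p_dec T_pos p_asymp beta s eps unfolding p_def T_def
    by unfold_locales (simp_all add: field_simps)
qed

theorem proposition11:
  fixes lam :: "nat \<Rightarrow> real" and \<beta> s :: real
  assumes nonneg: "\<forall>k\<ge>1. 0 \<le> lam k"
    and noninc: "\<forall>k\<ge>1. lam (Suc k) \<le> lam k"
    and summ: "summable (\<lambda>k. lam (Suc k))"
    and pos1: "lam 1 > 0"
    and beta: "\<beta> > 0" and s: "s > 0"
    and asym: "(\<lambda>k. lam k / trace_ev lam) \<sim>[at_top]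
               (\<lambda>k. \<beta> / (real k * ln (real k) * ln (ln (real k)) powr (1 + s)))"
  shows "\<forall>\<epsilon>. 0 < \<epsilon> \<and> \<epsilon> < 1 \<longrightarrow>
    (\<lambda>d. ln (ln (real (n_tensor lam d \<epsilon>)))) \<sim>[at_top]
    (\<lambda>d. (\<beta> * real d / (s * \<bar>ln (1 - \<epsilon>\<^sup>2)\<bar>)) powr (1 / s))"
proof (intro allI impI)
  fix \<epsilon> :: real assume "0 < \<epsilon> \<and> \<epsilon> < 1"
  then interpret prop11_setting "\<lambda>k. lam k / trace_ev lam" lam "trace_ev lam" \<beta> s \<epsilon>
    using prop11_setting_intro[OF assms] by blast
  show "(\<lambda>d. ln (ln (real (n_tensor lam d \<epsilon>)))) \<sim>[at_top]
    (\<lambda>d. (\<beta> * real d / (s * \<bar>ln (1 - \<epsilon>\<^sup>2)\<bar>)) powr (1 / s))"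
    using lnln_n_tensor_asymp unfolding L_def[abs_def] c_def .
qed

end
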